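(* Let $P$ be a finite poset and $L\subseteq k[x_P]$ a $P$-stable monomial ideal. If $\mathfrak{p}$ is an associated prime ideal of $L$, then $\mathfrak{p}=(x_p)_{p\in I}$ for some poset ideal $I\subseteq P$.
   Context: $k$ is a field and $k[x_P]$ the polynomial ring in variables $x_p$, $p\in P$. For $b\in P$, a $b$-chain is a multichain $C: p_1\le\dots\le p_r$ with $p_r\le b$; its length is $r$, $m_C=\prod x_{p_i}$; $C$ is in a monomial $m$ if $m_C\mid m$; a longest $b$-chain in $m$ is one of maximal length among $b$-chains in $m$; $C$ goes through $a$ if $a\le b$ and $a$ is comparable to every $p_i$. For an antichain $B$, $m_B=\prod_{b\in B}x_b$. A monomial ideal $I$ is $P$-stable if whenever $m=n\,m_B\in I$ ($n$ a monomial, $B$ an antichain) and $a\in P$ is such that for every $b\in B$ some longest $b$-chain in $m$ goes through $a$, then $n\,x_a\in I$. A poset ideal is a down-closed subset. *)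

theory Defs
  imports "HOL-Library.Poly_Mapping"
begin

text \<open>The polynomial ring k[x_P]: polynomials are finitely supported maps from
monomials (exponent vectors P =>0 nat) to coefficients in k.
The poset P is the (finite) type 'a with its partial order.\<close>

type_synonym ('a, 'k) mpoly = "('a \<Rightarrow>\<^sub>0 nat) \<Rightarrow>\<^sub>0 'k"

definition monom :: "('a \<Rightarrow>\<^sub>0 nat) \<Rightarrow> ('a, 'k::comm_ring_1) mpoly" where
  "monom \<alpha> = Poly_Mapping.single \<alpha> 1"

definition var_exp :: "'a \<Rightarrow> ('a \<Rightarrow>\<^sub>0 nat)" where
  "var_exp p = Poly_Mapping.single p 1"

definition is_ideal :: "'r::comm_ring_1 set \<Rightarrow> bool" where
  "is_ideal I \<longleftrightarrow> 0 \<in> I \<and> (\<forall>f\<in>I. \<forall>g\<in>I. f + g \<in> I) \<and> (\<forall>f\<in>I. \<forall>r. r * f \<in> I)"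

definition ideal_gen :: "'r::comm_ring_1 set \<Rightarrow> 'r set" where
  "ideal_gen S = \<Inter>{I. is_ideal I \<and> S \<subseteq> I}"

definition is_prime_ideal :: "'r::comm_ring_1 set \<Rightarrow> bool" where
  "is_prime_ideal I \<longleftrightarrow> is_ideal I \<and> 1 \<notin> I \<and> (\<forall>f g. f * g \<in> I \<longrightarrow> f \<in> I \<or> g \<in> I)"

definition associated_prime :: "'r::comm_ring_1 set \<Rightarrow> 'r set \<Rightarrow> bool" where
  "associated_prime L p \<longleftrightarrow> is_prime_ideal p \<and> (\<exists>f. p = {g. g * f \<in> L})"

definition monomial_ideal :: "('a, 'k::comm_ring_1) mpoly set \<Rightarrow> bool" where
  "monomial_ideal L \<longleftrightarrow> (\<exists>M. L = ideal_gen (monom ` M))"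

definition mdvd :: "('a \<Rightarrow>\<^sub>0 nat) \<Rightarrow> ('a \<Rightarrow>\<^sub>0 nat) \<Rightarrow> bool" where
  "mdvd m m' \<longleftrightarrow> (\<forall>p. Poly_Mapping.lookup m p \<le> Poly_Mapping.lookup m' p)"

definition is_bchain :: "'a::order \<Rightarrow> 'a list \<Rightarrow> bool" where
  "is_bchain b C \<longleftrightarrow> sorted_wrt (\<le>) C \<and> (C \<noteq> [] \<longrightarrow> last C \<le> b)"

definition chain_mon :: "'a list \<Rightarrow> ('a \<Rightarrow>\<^sub>0 nat)" where
  "chain_mon C = sum_list (map var_exp C)"

definition chain_in :: "'a list \<Rightarrow> ('a \<Rightarrow>\<^sub>0 nat) \<Rightarrow> bool" where
  "chain_in C m \<longleftrightarrow> mdvd (chain_mon C) m"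

definition longest_bchain :: "'a::order \<Rightarrow> ('a \<Rightarrow>\<^sub>0 nat) \<Rightarrow> 'a list \<Rightarrow> bool" where
  "longest_bchain b m C \<longleftrightarrow> is_bchain b C \<and> chain_in C m \<and>
     (\<forall>D. is_bchain b D \<and> chain_in D m \<longrightarrow> length D \<le> length C)"

definition goes_through :: "'a::order \<Rightarrow> 'a \<Rightarrow> 'a list \<Rightarrow> bool" where
  "goes_through b a C \<longleftrightarrow> a \<le> b \<and> (\<forall>p\<in>set C. a \<le> p \<or> p \<le> a)"

definition antichain :: "'a::order set \<Rightarrow> bool" where
  "antichain B \<longleftrightarrow> (\<forall>x\<in>B. \<forall>y\<in>B. x \<le> y \<longrightarrow> x = y)"

definition antichain_mon :: "'a set \<Rightarrow> ('a \<Rightarrow>\<^sub>0 nat)" where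
  "antichain_mon B = (\<Sum>b\<in>B. var_exp b)"

definition P_stable :: "('a::{finite,order}, 'k::comm_ring_1) mpoly set \<Rightarrow> bool" where
  "P_stable L \<longleftrightarrow> monomial_ideal L \<and>
    (\<forall>n B a. antichain B \<and> monom (n + antichain_mon B) \<in> L \<and>
       (\<forall>b\<in>B. \<exists>C. longest_bchain b (n + antichain_mon B) C \<and> goes_through b a C)
       \<longrightarrow> monom (n + var_exp a) \<in> L)"

definition poset_ideal :: "'a::order set \<Rightarrow> bool" where
  "poset_ideal I \<longleftrightarrow> (\<forall>x\<in>I. \<forall>y. y \<le> x \<longrightarrow> y \<in> I)"

end

theory Submission
  imports Defs
begin

(*
  Write p = (L : f) and choose the witness f with the fewest terms. Minimality makes every term
  x^al of f reduced: x^u x^al is not in L whenever x^u is not in p, for otherwise x^u f, with its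
  terms lying in L removed, would be a shorter witness. As k[x_P] is a domain, it follows that p
  contains every term of each of its elements, so the prime p is generated by the variables it
  contains.
  If x_b is in p and a <= b, then x_b f in L produces x_b x^al in L for a term x^al of f. After
  multiplying by a large power x_a^N, the chain a <= ... <= a of length N is longer than any
  b-chain avoiding a, so every longest b-chain goes through a, and P-stability yields
  x_a^(N+1) x^al in L. Reducedness of x^al then forces x_a into p.
*)

lemma is_ideal_mult_left: "is_ideal I \<Longrightarrow> f \<in> I \<Longrightarrow> r * f \<in> I"
  unfolding is_ideal_def by blast

lemma is_ideal_mult_right: "is_ideal I \<Longrightarrow> f \<in> I \<Longrightarrow> f * r \<in> I"
  unfolding is_ideal_def by (metis mult.commute)

lemma is_ideal_add: "is_ideal I \<Longrightarrow> f \<in> I \<Longrightarrow> g \<in> I \<Longrightarrow> f + g \<in> I"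
  unfolding is_ideal_def by blast

lemma is_ideal_diff:
  assumes "is_ideal I" "f \<in> I" "g \<in> I"
  shows "f - g \<in> I"
  using is_ideal_add[OF assms(1,2) is_ideal_mult_left[OF assms(1,3), of "-1"]] by simp

lemma is_ideal_sum:
  assumes "is_ideal I" "\<And>x. x \<in> A \<Longrightarrow> h x \<in> I"
  shows "sum h A \<in> I"
  using assms(2)
proof (induction A rule: infinite_finite_induct)
  case (insert x A)
  then show ?case by (simp add: is_ideal_add[OF assms(1)])
qed (use assms(1) in \<open>simp_all add: is_ideal_def\<close>)

lemma is_ideal_ideal_gen: "is_ideal (ideal_gen S)"
  unfolding ideal_gen_def is_ideal_def by blast

lemma ideal_gen_superset: "S \<subseteq> ideal_gen S"
  unfolding ideal_gen_def by blast

lemma ideal_gen_least: "is_ideal I \<Longrightarrow> S \<subseteq> I \<Longrightarrow> ideal_gen S \<subseteq> I"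
  unfolding ideal_gen_def by blast

lemma colon_eq_if_diff_mem:
  assumes "is_ideal L" "h - h' \<in> L"
  shows "{g. g * h \<in> L} = {g. g * h' \<in> L}"
proof -
  have diff: "g * h - g * h' \<in> L" for g
    using is_ideal_mult_left[OF assms] by (simp add: right_diff_distrib)
  have "g * h \<in> L \<longleftrightarrow> g * h' \<in> L" for g
  proof
    assume "g * h \<in> L"
    from is_ideal_diff[OF assms(1) this diff[of g]] show "g * h' \<in> L" by simp
  next
    assume "g * h' \<in> L"
    from is_ideal_add[OF assms(1) diff[of g] this] show "g * h \<in> L" by simp
  qed
  then show ?thesis by blast
qed

lemma colon_prime_mult:
  assumes "is_prime_ideal p" "p = {g. g * f \<in> L}" "q \<notin> p"
  shows "p = {g. g * (q * f) \<in> L}"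
proof -
  have "g * (q * f) \<in> L \<longleftrightarrow> g \<in> p" for g
  proof -
    have "g * (q * f) \<in> L \<longleftrightarrow> g * q \<in> p"
      using assms(2) by (simp add: mult.assoc)
    also have "\<dots> \<longleftrightarrow> g \<in> p"
      using assms(1,3) is_ideal_mult_right unfolding is_prime_ideal_def by blast
    finally show ?thesis .
  qed
  then show ?thesis by blast
qed

section \<open>Monomial ideals\<close>

lemma monom_mult: "monom \<alpha> * monom \<beta> = (monom (\<alpha> + \<beta>) :: ('a, 'k::comm_ring_1) mpoly)"
  by (simp add: monom_def mult_single)

lemma monom_zero: "monom 0 = (1 :: ('a, 'k::comm_ring_1) mpoly)"
  by (simp add: monom_def)

lemma keys_monom [simp]: "Poly_Mapping.keys (monom \<alpha> :: ('a, 'k::comm_ring_1) mpoly) = {\<alpha>}"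
  by (simp add: monom_def)

lemma monom_neq_zero: "monom \<alpha> \<noteq> (0 :: ('a, 'k::comm_ring_1) mpoly)"
  using keys_monom[of \<alpha>] by (metis empty_not_insert keys_eq_empty)

lemma is_ideal_monom_add: "is_ideal J \<Longrightarrow> monom \<alpha> \<in> J \<Longrightarrow> monom (\<beta> + \<alpha>) \<in> J"
  by (metis is_ideal_mult_left monom_mult)

definition restrict_keys :: "'b set \<Rightarrow> ('b \<Rightarrow>\<^sub>0 'c::comm_monoid_add) \<Rightarrow> 'b \<Rightarrow>\<^sub>0 'c" where
  "restrict_keys A h = (\<Sum>\<alpha>\<in>A \<inter> Poly_Mapping.keys h. Poly_Mapping.single \<alpha> (Poly_Mapping.lookup h \<alpha>))"

lemma lookup_restrict_keys: "Poly_Mapping.lookup (restrict_keys A h) \<beta> = (if \<beta> \<in> A then Poly_Mapping.lookup h \<beta> else 0)"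
proof -
  have "Poly_Mapping.lookup (restrict_keys A h) \<beta> = (\<Sum>\<alpha>\<in>A \<inter> Poly_Mapping.keys h. if \<alpha> = \<beta> then Poly_Mapping.lookup h \<alpha> else 0)"
    unfolding restrict_keys_def lookup_sum by (intro sum.cong) (auto simp: lookup_single when_def)
  then show ?thesis by (simp add: sum.delta' in_keys_iff)
qed

lemma keys_restrict_keys: "Poly_Mapping.keys (restrict_keys A h) = A \<inter> Poly_Mapping.keys h"
  by (auto simp: in_keys_iff lookup_restrict_keys split: if_splits)

lemma restrict_keys_keys: "restrict_keys (Poly_Mapping.keys h) h = h"
  by (rule poly_mapping_eqI) (simp add: lookup_restrict_keys in_keys_iff)

lemma keys_diff_restrict_keys:
  fixes h :: "'b \<Rightarrow>\<^sub>0 'c::ab_group_add"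
  shows "Poly_Mapping.keys (h - restrict_keys A h) = Poly_Mapping.keys h - A"
  by (auto simp: in_keys_iff lookup_minus lookup_restrict_keys split: if_splits)

lemma mem_ideal_if_terms_mem:
  fixes h :: "('a, 'k::comm_ring_1) mpoly"
  assumes "is_ideal J" "\<And>\<alpha>. \<alpha> \<in> Poly_Mapping.keys h \<Longrightarrow> monom \<alpha> \<in> J"
  shows "h \<in> J"
proof -
  have "Poly_Mapping.single \<alpha> (Poly_Mapping.lookup h \<alpha>) \<in> J" if "\<alpha> \<in> Poly_Mapping.keys h" for \<alpha>
    using is_ideal_mult_left[OF assms(1) assms(2)[OF that], of "Poly_Mapping.single 0 (Poly_Mapping.lookup h \<alpha>)"]
    by (simp add: monom_def mult_single)
  then have "restrict_keys (Poly_Mapping.keys h) h \<in> J"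
    unfolding restrict_keys_def by (auto intro: is_ideal_sum[OF assms(1)])
  then show ?thesis by (simp add: restrict_keys_keys)
qed

lemma diff_restrict_keys_mem:
  fixes h :: "('a, 'k::comm_ring_1) mpoly"
  assumes "is_ideal J" "\<And>\<alpha>. \<alpha> \<in> Poly_Mapping.keys h \<Longrightarrow> \<alpha> \<notin> A \<Longrightarrow> monom \<alpha> \<in> J"
  shows "h - restrict_keys A h \<in> J"
  using assms by (rule mem_ideal_if_terms_mem) (auto simp: keys_diff_restrict_keys)

lemma mdvd_add_left: "mdvd \<mu> \<beta> \<Longrightarrow> mdvd \<mu> (\<alpha> + \<beta>)"
  unfolding mdvd_def by (simp add: lookup_add trans_le_add2)

lemma mdvd_diff_add_cancel: "mdvd \<mu> \<alpha> \<Longrightarrow> (\<alpha> - \<mu>) + \<mu> = \<alpha>"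
  unfolding mdvd_def by (intro poly_mapping_eqI) (simp add: lookup_add lookup_minus)

lemma monomial_ideal_is_ideal: "monomial_ideal L \<Longrightarrow> is_ideal L"
  unfolding monomial_ideal_def using is_ideal_ideal_gen by blast

lemma monomial_ideal_term_mem:
  fixes L :: "('a, 'k::comm_ring_1) mpoly set"
  assumes "monomial_ideal L" "h \<in> L" "\<alpha> \<in> Poly_Mapping.keys h"
  shows "monom \<alpha> \<in> L"
proof -
  obtain M where L: "L = ideal_gen (monom ` M)"
    using assms(1) unfolding monomial_ideal_def by blast
  define S where "S = {g :: ('a, 'k) mpoly. \<forall>\<alpha>\<in>Poly_Mapping.keys g. \<exists>\<mu>\<in>M. mdvd \<mu> \<alpha>}"
  have "is_ideal S"
    unfolding is_ideal_def
  proof (intro conjI ballI allI)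
    fix f g assume "f \<in> S" "g \<in> S"
    then show "f + g \<in> S" using keys_add[of f g] by (auto simp: S_def)
  next
    fix f r assume "f \<in> S"
    show "r * f \<in> S"
      unfolding S_def
    proof (intro CollectI ballI)
      fix \<gamma> assume "\<gamma> \<in> Poly_Mapping.keys (r * f)"
      then obtain \<beta> \<delta> where "\<gamma> = \<beta> + \<delta>" "\<delta> \<in> Poly_Mapping.keys f"
        using keys_mult by blast
      with \<open>f \<in> S\<close> show "\<exists>\<mu>\<in>M. mdvd \<mu> \<gamma>"
        unfolding S_def by (blast intro: mdvd_add_left)
    qed
  qed (simp add: S_def)
  moreover have "monom ` M \<subseteq> S" by (auto simp: S_def mdvd_def)
  ultimately have "h \<in> S" using assms(2) ideal_gen_least unfolding L by blast
  then obtain \<mu> where \<mu>: "\<mu> \<in> M" "mdvd \<mu> \<alpha>" using assms(3) unfolding S_def by blast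
  have "monom \<mu> \<in> L" using \<mu>(1) ideal_gen_superset unfolding L by blast
  then have "monom ((\<alpha> - \<mu>) + \<mu>) \<in> L"
    using is_ideal_monom_add is_ideal_ideal_gen unfolding L by blast
  then show ?thesis by (simp only: mdvd_diff_add_cancel[OF \<mu>(2)])
qed

lemma mdvd_var_exp_iff: "mdvd (var_exp i) \<alpha> \<longleftrightarrow> 0 < Poly_Mapping.lookup \<alpha> i"
  unfolding mdvd_def var_exp_def by (auto simp: lookup_single when_def dest: spec[of _ i])

definition deg :: "('a::finite \<Rightarrow>\<^sub>0 nat) \<Rightarrow> nat" where
  "deg \<alpha> = (\<Sum>i\<in>UNIV. Poly_Mapping.lookup \<alpha> i)"

lemma deg_add: "deg (\<alpha> + \<beta>) = deg \<alpha> + deg \<beta>"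
  by (simp add: deg_def lookup_add sum.distrib)

lemma deg_var_exp: "deg (var_exp i) = 1"
  by (simp add: deg_def var_exp_def lookup_single when_def)

lemma deg_mono: "mdvd \<alpha> \<beta> \<Longrightarrow> deg \<alpha> \<le> deg \<beta>"
  unfolding deg_def mdvd_def by (intro sum_mono) auto

lemma prime_ideal_monom_mem_imp_var_mem:
  fixes p :: "('a::finite, 'k::comm_ring_1) mpoly set"
  assumes "is_prime_ideal p" "monom \<alpha> \<in> p"
  shows "\<exists>i. 0 < Poly_Mapping.lookup \<alpha> i \<and> monom (var_exp i) \<in> p"
  using assms(2)
proof (induction "deg \<alpha>" arbitrary: \<alpha> rule: less_induct)
  case less
  have "\<alpha> \<noteq> 0"
    using less.prems assms(1) by (auto simp: monom_zero is_prime_ideal_def)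
  then obtain i where i: "mdvd (var_exp i) \<alpha>"
    by (metis gr0I poly_mapping_eqI lookup_zero mdvd_var_exp_iff)
  have "monom (\<alpha> - var_exp i) * monom (var_exp i) \<in> p"
    using less.prems by (simp only: monom_mult mdvd_diff_add_cancel[OF i])
  then consider "monom (var_exp i) \<in> p" | "monom (\<alpha> - var_exp i) \<in> p"
    using assms(1) unfolding is_prime_ideal_def by blast
  then show ?case
  proof cases
    case 1
    with i show ?thesis by (auto simp: mdvd_var_exp_iff)
  next
    case 2
    have "deg \<alpha> = deg (\<alpha> - var_exp i) + 1"
      by (metis deg_add deg_var_exp mdvd_diff_add_cancel[OF i])
    then obtain j where "0 < Poly_Mapping.lookup (\<alpha> - var_exp i) j" "monom (var_exp j) \<in> p"
      using less.hyps 2 by fastforce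
    then have "0 < Poly_Mapping.lookup \<alpha> j" "monom (var_exp j) \<in> p"
      by (simp_all add: lookup_minus)
    then show ?thesis by blast
  qed
qed

lemma prime_ideal_monom_single_notin:
  assumes "is_prime_ideal p" "monom (var_exp a) \<notin> p"
  shows "monom (Poly_Mapping.single a n) \<notin> p"
proof (induction n)
  case 0
  then show ?case using assms(1) by (simp add: monom_zero is_prime_ideal_def)
next
  case (Suc n)
  have "monom (Poly_Mapping.single a (Suc n)) = monom (var_exp a) * monom (Poly_Mapping.single a n)"
    by (simp add: monom_mult var_exp_def single_add[symmetric])
  with Suc assms show ?case unfolding is_prime_ideal_def by metis
qed

lemma prime_monomial_ideal_eq_ideal_gen_vars:
  fixes p :: "('a::finite, 'k::comm_ring_1) mpoly set"
  assumes "is_prime_ideal p" "\<And>g \<alpha>. g \<in> p \<Longrightarrow> \<alpha> \<in> Poly_Mapping.keys g \<Longrightarrow> monom \<alpha> \<in> p"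
  shows "p = ideal_gen ((\<lambda>i. monom (var_exp i)) ` {i. monom (var_exp i) \<in> p})"
    (is "p = ?V")
proof (rule equalityI)
  show "?V \<subseteq> p"
    by (rule ideal_gen_least) (use assms(1) in \<open>auto simp: is_prime_ideal_def\<close>)
next
  show "p \<subseteq> ?V"
  proof
    fix g assume "g \<in> p"
    show "g \<in> ?V"
    proof (rule mem_ideal_if_terms_mem[OF is_ideal_ideal_gen])
      fix \<alpha> assume "\<alpha> \<in> Poly_Mapping.keys g"
      then obtain i where i: "0 < Poly_Mapping.lookup \<alpha> i" "monom (var_exp i) \<in> p"
        using prime_ideal_monom_mem_imp_var_mem[OF assms(1) assms(2)[OF \<open>g \<in> p\<close>]] by blast
      have "monom (var_exp i) \<in> ?V"
        using i(2) by (intro subsetD[OF ideal_gen_superset] imageI) simp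
      then have "monom ((\<alpha> - var_exp i) + var_exp i) \<in> ?V"
        by (rule is_ideal_monom_add[OF is_ideal_ideal_gen])
      then show "monom \<alpha> \<in> ?V"
        using i(1) by (simp only: mdvd_diff_add_cancel mdvd_var_exp_iff)
    qed
  qed
qed

section \<open>Absence of zero divisors\<close>

lemma mult_nonzero_if_additive_embedding:
  fixes f g :: "'m::monoid_add \<Rightarrow>\<^sub>0 'k::semiring_no_zero_divisors"
    and E :: "'m \<Rightarrow> 'n::{ordered_cancel_comm_monoid_add, linorder}"
  assumes E: "inj E" "\<And>a b. E (a + b) = E a + E b" and "f \<noteq> 0" "g \<noteq> 0"
  shows "f * g \<noteq> 0"
proof -
  define F G where "F = Poly_Mapping.keys f" and "G = Poly_Mapping.keys g"
  have F: "finite F" "F \<noteq> {}" and G: "finite G" "G \<noteq> {}"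
    using assms(3,4) by (auto simp: F_def G_def)
  have "Max (E ` F) \<in> E ` F"
    using F by (intro Max_in) auto
  then obtain a0 where a0: "a0 \<in> F" "E a0 = Max (E ` F)"
    by (metis imageE)
  have "Max (E ` G) \<in> E ` G"
    using G by (intro Max_in) auto
  then obtain b0 where b0: "b0 \<in> G" "E b0 = Max (E ` G)"
    by (metis imageE)
  have unique: "a = a0 \<and> b = b0" if "a \<in> F" "b \<in> G" "a + b = a0 + b0" for a b
  proof -
    have le: "E a \<le> E a0" "E b \<le> E b0"
      using that(1,2) a0(2) b0(2) F(1) G(1) by simp_all
    have sum: "E a + E b = E a0 + E b0"
      using that(3) E(2) by metis
    then have "E a = E a0"
      using le add_less_le_mono[of "E a" "E a0" "E b" "E b0"] by fastforce
    with sum have "E b = E b0" by simp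
    with \<open>E a = E a0\<close> show ?thesis using E(1) by (simp add: inj_eq)
  qed
  have "Poly_Mapping.lookup (f * g) (a0 + b0)
      = (\<Sum>(a, b). Poly_Mapping.lookup f a * Poly_Mapping.lookup g b when a0 + b0 = a + b)"
    by (simp add: times_poly_mapping.rep_eq prod_fun_unfold_prod)
  also have "\<dots> = (\<Sum>ab. (case ab of (a, b) \<Rightarrow> Poly_Mapping.lookup f a * Poly_Mapping.lookup g b)
      when (a0, b0) = ab)"
  proof (rule Sum_any.cong, clarify)
    fix a b
    show "(Poly_Mapping.lookup f a * Poly_Mapping.lookup g b when a0 + b0 = a + b)
      = (Poly_Mapping.lookup f a * Poly_Mapping.lookup g b when (a0, b0) = (a, b))"
      using unique[of a b] by (cases "a \<in> F \<and> b \<in> G") (auto simp: F_def G_def in_keys_iff when_def)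
  qed
  also have "\<dots> = Poly_Mapping.lookup f a0 * Poly_Mapping.lookup g b0"
    by simp
  also have "\<dots> \<noteq> 0"
    using a0(1) b0(1) by (simp add: F_def G_def in_keys_iff)
  finally show ?thesis by auto
qed

lemma mpoly_mult_nonzero:
  fixes f g :: "('a::finite, 'k::semiring_no_zero_divisors) mpoly"
  assumes "f \<noteq> 0" "g \<noteq> 0"
  shows "f * g \<noteq> 0"
proof -
  \<comment> \<open>The leading-term argument needs a linear order on exponents; embed \<open>'a\<close> into \<open>nat\<close>.\<close>
  obtain e :: "'a \<Rightarrow> nat" where "inj e"
    using finite_imp_inj_to_nat_seg[of "UNIV :: 'a set"] by auto
  define E :: "('a \<Rightarrow>\<^sub>0 nat) \<Rightarrow> (nat \<Rightarrow>\<^sub>0 nat)" where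
    "E \<alpha> = (\<Sum>i\<in>UNIV. Poly_Mapping.single (e i) (Poly_Mapping.lookup \<alpha> i))" for \<alpha>
  have "Poly_Mapping.lookup (E \<alpha>) (e j) = Poly_Mapping.lookup \<alpha> j" for \<alpha> j
    unfolding E_def lookup_sum using \<open>inj e\<close> by (simp add: lookup_single when_def inj_eq)
  then have "inj E"
    by (intro injI poly_mapping_eqI) metis
  moreover have "E (\<alpha> + \<beta>) = E \<alpha> + E \<beta>" for \<alpha> \<beta>
    unfolding E_def by (simp add: lookup_add single_add sum.distrib)
  ultimately show ?thesis
    using mult_nonzero_if_additive_embedding assms by blast
qed

section \<open>Associated primes of monomial ideals\<close>

lemma colon_eq_colon_restrict_nonmembers:
  fixes h :: "('a, 'k::comm_ring_1) mpoly"
  assumes "is_ideal L"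
  shows "{g. g * h \<in> L} = {g. g * restrict_keys {\<alpha>. monom \<alpha> \<notin> L} h \<in> L}"
  by (rule colon_eq_if_diff_mem[OF assms diff_restrict_keys_mem[OF assms]]) simp

lemma associated_prime_reduced_witness:
  fixes L p :: "('a, 'k::comm_ring_1) mpoly set"
  assumes L: "monomial_ideal L" and p: "associated_prime L p"
  obtains f where "p = {g. g * f \<in> L}" "f \<noteq> 0"
    "\<And>u \<alpha>. monom u \<notin> p \<Longrightarrow> \<alpha> \<in> Poly_Mapping.keys f \<Longrightarrow> monom (u + \<alpha>) \<notin> L"
proof -
  have idL: "is_ideal L"
    using L by (rule monomial_ideal_is_ideal)
  have pr: "is_prime_ideal p"
    using p unfolding associated_prime_def by blast
  define W where "W = {f. p = {g. g * f \<in> L}}"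
  obtain f where f: "f \<in> W"
    and min: "\<And>h. h \<in> W \<Longrightarrow> card (Poly_Mapping.keys f) \<le> card (Poly_Mapping.keys h)"
    using ex_has_least_nat[of "\<lambda>h. h \<in> W" _ "\<lambda>h. card (Poly_Mapping.keys h)"] p
    unfolding associated_prime_def W_def by blast
  have reduced: "monom (u + \<alpha>) \<notin> L" if u: "monom u \<notin> p" and \<alpha>: "\<alpha> \<in> Poly_Mapping.keys f" for u \<alpha>
  proof
    assume "monom (u + \<alpha>) \<in> L"
    define h where "h = restrict_keys {\<beta>. monom \<beta> \<notin> L} (monom u * f)"
    have "h \<in> W"
      using colon_prime_mult[OF pr _ u] f colon_eq_colon_restrict_nonmembers[OF idL]
      unfolding W_def h_def by blast
    have "Poly_Mapping.keys h \<subseteq> (+) u ` (Poly_Mapping.keys f - {\<alpha>})"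
    proof
      fix \<gamma> assume "\<gamma> \<in> Poly_Mapping.keys h"
      then have "\<gamma> \<in> Poly_Mapping.keys (monom u * f)" "monom \<gamma> \<notin> L"
        by (auto simp: h_def keys_restrict_keys)
      then show "\<gamma> \<in> (+) u ` (Poly_Mapping.keys f - {\<alpha>})"
        using keys_mult[of "monom u" f] \<open>monom (u + \<alpha>) \<in> L\<close> by auto
    qed
    then have "card (Poly_Mapping.keys h) \<le> card (Poly_Mapping.keys f - {\<alpha>})"
      by (meson card_image_le card_mono finite_Diff finite_imageI finite_keys order_trans)
    also have "\<dots> < card (Poly_Mapping.keys f)"
      by (rule card_Diff1_less[OF finite_keys \<alpha>])
    finally show False
      using min[OF \<open>h \<in> W\<close>] by simp
  qed
  have "f \<noteq> 0"
  proof
    assume "f = 0"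
    then have "1 \<in> p" using f idL unfolding W_def is_ideal_def by simp
    with pr show False unfolding is_prime_ideal_def by blast
  qed
  with f reduced that show ?thesis unfolding W_def by blast
qed

lemma associated_prime_term_mem:
  fixes L p :: "('a::finite, 'k::idom) mpoly set"
  assumes L: "monomial_ideal L" and p: "associated_prime L p"
    and "g \<in> p" "\<alpha> \<in> Poly_Mapping.keys g"
  shows "monom \<alpha> \<in> p"
proof (rule ccontr)
  assume "monom \<alpha> \<notin> p"
  obtain f where f: "p = {g. g * f \<in> L}" "f \<noteq> 0"
    and reduced: "\<And>u \<alpha>. monom u \<notin> p \<Longrightarrow> \<alpha> \<in> Poly_Mapping.keys f \<Longrightarrow> monom (u + \<alpha>) \<notin> L"
    using associated_prime_reduced_witness[OF L p] by blast
  have idp: "is_ideal p"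
    using p unfolding associated_prime_def is_prime_ideal_def by blast
  define g' where "g' = restrict_keys {\<beta>. monom \<beta> \<notin> p} g"
  have "g - g' \<in> p"
    unfolding g'_def by (rule diff_restrict_keys_mem[OF idp]) simp
  from is_ideal_diff[OF idp \<open>g \<in> p\<close> this] have "g' * f \<in> L"
    using f(1) by simp
  have "\<alpha> \<in> Poly_Mapping.keys g'"
    using assms(4) \<open>monom \<alpha> \<notin> p\<close> by (simp add: g'_def keys_restrict_keys)
  then have "g' \<noteq> 0" by auto
  then have "g' * f \<noteq> 0"
    using f(2) by (rule mpoly_mult_nonzero)
  then obtain \<gamma> where "\<gamma> \<in> Poly_Mapping.keys (g' * f)"
    by (metis ex_in_conv keys_eq_empty)
  moreover obtain \<beta> \<delta> where "\<gamma> = \<beta> + \<delta>" "\<beta> \<in> Poly_Mapping.keys g'" "\<delta> \<in> Poly_Mapping.keys f"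
    using keys_mult calculation by blast
  ultimately have "monom (\<beta> + \<delta>) \<in> L"
    using monomial_ideal_term_mem[OF L \<open>g' * f \<in> L\<close>] by simp
  moreover have "monom \<beta> \<notin> p"
    using \<open>\<beta> \<in> Poly_Mapping.keys g'\<close> by (simp add: g'_def keys_restrict_keys)
  ultimately show False
    using reduced \<open>\<delta> \<in> Poly_Mapping.keys f\<close> by blast
qed

section \<open>Longest chains and P-stability\<close>

lemma chain_mon_Cons: "chain_mon (x # C) = var_exp x + chain_mon C"
  by (simp add: chain_mon_def)

lemma deg_chain_mon: "deg (chain_mon C) = length C"
  by (induction C) (simp_all add: chain_mon_Cons deg_add deg_var_exp, simp add: chain_mon_def deg_def)

lemma lookup_chain_mon_notin: "a \<notin> set C \<Longrightarrow> Poly_Mapping.lookup (chain_mon C) a = 0"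
  by (induction C) (auto simp: chain_mon_Cons lookup_add var_exp_def lookup_single, simp add: chain_mon_def)

lemma chain_mon_replicate: "chain_mon (replicate N a) = Poly_Mapping.single a N"
  by (induction N) (simp_all add: chain_mon_Cons var_exp_def single_add[symmetric], simp add: chain_mon_def)

lemma length_le_deg_if_chain_in: "chain_in C m \<Longrightarrow> length C \<le> deg m"
  unfolding chain_in_def by (metis deg_chain_mon deg_mono)

lemma longest_bchain_exists:
  fixes b :: "'a::{finite,order}"
  assumes "is_bchain b C" "chain_in C m"
  obtains D where "longest_bchain b m D" "length C \<le> length D"
proof -
  let ?P = "\<lambda>k. \<exists>D. is_bchain b D \<and> chain_in D m \<and> length D = k"
  have "k < Suc (deg m)" if "?P k" for k
    using that by (auto dest: length_le_deg_if_chain_in)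
  then obtain k where "?P k" "\<And>k'. ?P k' \<Longrightarrow> k' \<le> k"
    using ex_has_greatest_nat[of ?P "length C" "\<lambda>k. k" "Suc (deg m)"] assms by blast
  then show ?thesis
    using that assms unfolding longest_bchain_def by blast
qed

lemma sorted_wrt_le_comparable:
  "sorted_wrt (\<le>) xs \<Longrightarrow> x \<in> set xs \<Longrightarrow> y \<in> set xs \<Longrightarrow> x \<le> y \<or> y \<le> (x::'a::order)"
  by (induction xs) auto

lemma longest_bchain_goes_through:
  fixes a b :: "'a::{finite,order}"
  assumes "a \<le> b" "deg r < N"
  shows "\<exists>C. longest_bchain b (Poly_Mapping.single a N + r) C \<and> goes_through b a C"
proof -
  let ?m = "Poly_Mapping.single a N + r"
  have "is_bchain b (replicate N a)"
    using assms unfolding is_bchain_def by (simp add: sorted_wrt_iff_nth_less)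
  moreover have "chain_in (replicate N a) ?m"
    unfolding chain_in_def chain_mon_replicate mdvd_def by (simp add: lookup_add)
  ultimately obtain C where C: "longest_bchain b ?m C" and "N \<le> length C"
    using longest_bchain_exists by (metis length_replicate)
  have "a \<in> set C"
  proof (rule ccontr)
    assume "a \<notin> set C"
    have "Poly_Mapping.lookup (chain_mon C) q \<le> Poly_Mapping.lookup r q" for q
    proof (cases "q = a")
      case True
      then show ?thesis using \<open>a \<notin> set C\<close> by (simp add: lookup_chain_mon_notin)
    next
      case False
      with C show ?thesis
        unfolding longest_bchain_def chain_in_def mdvd_def
        by (auto simp: lookup_add lookup_single when_def dest: spec[of _ q])
    qed
    then have "mdvd (chain_mon C) r"
      unfolding mdvd_def by blast
    then have "length C \<le> deg r"
      by (metis deg_chain_mon deg_mono)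
    with assms(2) \<open>N \<le> length C\<close> show False by simp
  qed
  moreover have "sorted_wrt (\<le>) C"
    using C unfolding longest_bchain_def is_bchain_def by blast
  ultimately have "goes_through b a C"
    using assms(1) sorted_wrt_le_comparable unfolding goes_through_def by blast
  with C show ?thesis by blast
qed

lemma P_stable_associated_prime_var_mem_down_closed:
  fixes L p :: "('a::{finite,order}, 'k::idom) mpoly set"
  assumes L: "P_stable L" and p: "associated_prime L p"
    and b: "monom (var_exp b) \<in> p" and "a \<le> b"
  shows "monom (var_exp a) \<in> p"
proof (rule ccontr)
  assume a: "monom (var_exp a) \<notin> p"
  have mL: "monomial_ideal L"
    using L unfolding P_stable_def by blast
  obtain f where f: "p = {g. g * f \<in> L}" "f \<noteq> 0"
    and reduced: "\<And>u \<alpha>. monom u \<notin> p \<Longrightarrow> \<alpha> \<in> Poly_Mapping.keys f \<Longrightarrow> monom (u + \<alpha>) \<notin> L"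
    using associated_prime_reduced_witness[OF mL p] by blast
  have "monom (var_exp b) * f \<noteq> 0"
    using monom_neq_zero f(2) by (rule mpoly_mult_nonzero)
  then obtain \<gamma> where "\<gamma> \<in> Poly_Mapping.keys (monom (var_exp b) * f)"
    by (metis ex_in_conv keys_eq_empty)
  moreover from this obtain \<alpha> where \<alpha>: "\<alpha> \<in> Poly_Mapping.keys f" "\<gamma> = var_exp b + \<alpha>"
    using keys_mult[of "monom (var_exp b)" f] by auto
  ultimately have "monom (var_exp b + \<alpha>) \<in> L"
    using monomial_ideal_term_mem[OF mL] b f(1) by blast
  define N where "N = Suc (deg (var_exp b + \<alpha>))"
  define n where "n = Poly_Mapping.single a N + \<alpha>"
  have m: "n + antichain_mon {b} = Poly_Mapping.single a N + (var_exp b + \<alpha>)"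
    by (simp add: n_def antichain_mon_def algebra_simps)
  have "monom (n + antichain_mon {b}) \<in> L"
    unfolding m using monomial_ideal_is_ideal[OF mL] \<open>monom (var_exp b + \<alpha>) \<in> L\<close>
    by (rule is_ideal_monom_add)
  moreover have "\<exists>C. longest_bchain b (n + antichain_mon {b}) C \<and> goes_through b a C"
    unfolding m using \<open>a \<le> b\<close> by (rule longest_bchain_goes_through) (simp add: N_def)
  ultimately have "monom (n + var_exp a) \<in> L"
    using L unfolding P_stable_def antichain_def by blast
  moreover have "n + var_exp a = Poly_Mapping.single a (Suc N) + \<alpha>"
    by (simp add: n_def var_exp_def single_add[symmetric] algebra_simps)
  moreover have "monom (Poly_Mapping.single a (Suc N)) \<notin> p"
    using p a unfolding associated_prime_def by (metis prime_ideal_monom_single_notin)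
  ultimately show False
    using reduced \<alpha>(1) by metis
qed

theorem proposition3p18:
  fixes L :: "('a::{finite,order}, 'k::field) mpoly set"
    and p :: "('a, 'k) mpoly set"
  assumes "P_stable L"
    and "associated_prime L p"
  shows "\<exists>I. poset_ideal I \<and> p = ideal_gen ((\<lambda>i. monom (var_exp i)) ` I)"
proof -
  have L: "monomial_ideal L"
    using assms(1) unfolding P_stable_def by blast
  have "is_prime_ideal p"
    using assms(2) unfolding associated_prime_def by blast
  then have "p = ideal_gen ((\<lambda>i. monom (var_exp i)) ` {i. monom (var_exp i) \<in> p})"
    using associated_prime_term_mem[OF L assms(2)] by (rule prime_monomial_ideal_eq_ideal_gen_vars)
  moreover have "poset_ideal {i. monom (var_exp i) \<in> p}"
    unfolding poset_ideal_def
    using P_stable_associated_prime_var_mem_down_closed[OF assms] by blast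
  ultimately show ?thesis by blast
qed

end
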